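(* Let $\mathbf{A}$ be an $n\times n$ skew-symmetric matrix over a field $K$ and $\mathbf{v}\in K^n$. Then the set system $([n],\mathcal{B})$ with $\mathcal{B}=\{I\subseteq[n]:(\mathbf{A}+\mathbf{v}\mathbf{v}^T)[I]\text{ is nonsingular}\}$ is a strong $\Delta$-matroid.
   Context: A matrix is skew-symmetric if $\mathbf{A}_{ij}=-\mathbf{A}_{ji}$ and $\mathbf{A}_{ii}=0$. $\mathbf{M}[I]$ is the principal submatrix indexed by $I$; the empty matrix is nonsingular. A $\Delta$-matroid is a pair $(E,\mathcal{B})$ with $\mathcal{B}$ a nonempty family of subsets of the finite set $E$ such that for all $B,B'\in\mathcal{B}$ and $x\in B\triangle B'$ there is $y\in B\triangle B'$ with $B\triangle\{x,y\}\in\mathcal{B}$. It is strong if for all $B,B'\in\mathcal{B}$ and $x\in B\triangle B'$ there is $y\in B\triangle B'$ with both $B\triangle\{x,y\}\in\mathcal{B}$ and $B'\triangle\{x,y\}\in\mathcal{B}$. *)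

theory Defs
  imports "Jordan_Normal_Form.Determinant" "Jordan_Normal_Form.DL_Submatrix"
begin

definition skew_symmetric_mat :: "nat \<Rightarrow> 'a::ring_1 mat \<Rightarrow> bool" where
  "skew_symmetric_mat n A \<longleftrightarrow> A \<in> carrier_mat n n \<and>
     (\<forall>i<n. \<forall>j<n. A $$ (i,j) = - A $$ (j,i)) \<and> (\<forall>i<n. A $$ (i,i) = 0)"

definition principal_submatrix :: "'a mat \<Rightarrow> nat set \<Rightarrow> 'a mat" where
  "principal_submatrix M I = submatrix M I I"

text \<open>Nonsingular square matrix: nonzero determinant (the empty matrix has det 1).\<close>
definition nonsingular :: "'a::field mat \<Rightarrow> bool" where
  "nonsingular M \<longleftrightarrow> det M \<noteq> 0"

definition outer_self :: "'a::ring_1 vec \<Rightarrow> 'a mat" where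
  "outer_self v = mat (dim_vec v) (dim_vec v) (\<lambda>(i,j). v $ i * v $ j)"

definition symdiff :: "'e set \<Rightarrow> 'e set \<Rightarrow> 'e set" (infixl "\<triangle>" 70) where
  "A \<triangle> B = (A - B) \<union> (B - A)"

definition delta_matroid :: "'e set \<Rightarrow> 'e set set \<Rightarrow> bool" where
  "delta_matroid E \<B> \<longleftrightarrow> finite E \<and> \<B> \<noteq> {} \<and> (\<forall>B\<in>\<B>. B \<subseteq> E) \<and>
     (\<forall>B\<in>\<B>. \<forall>B'\<in>\<B>. \<forall>x\<in>B \<triangle> B'. \<exists>y\<in>B \<triangle> B'. B \<triangle> {x,y} \<in> \<B>)"

definition strong_delta_matroid :: "'e set \<Rightarrow> 'e set set \<Rightarrow> bool" where
  "strong_delta_matroid E \<B> \<longleftrightarrow> delta_matroid E \<B> \<and>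
     (\<forall>B\<in>\<B>. \<forall>B'\<in>\<B>. \<forall>x\<in>B \<triangle> B'. \<exists>y\<in>B \<triangle> B'.
        B \<triangle> {x,y} \<in> \<B> \<and> B' \<triangle> {x,y} \<in> \<B>)"

end

theory Submission
  imports Defs
begin

text \<open>Let \<open>keep_cols n M X\<close> be \<open>M\<close> with every column outside \<open>X\<close> replaced by the
  corresponding column of the identity; its determinant is the principal minor \<open>det M[X]\<close>.
  If \<open>M[B]\<close> is nonsingular, the principal pivot transform \<open>P\<close> of \<open>M\<close> at \<open>B\<close> satisfies
  \<open>det M[B \<triangle> X] = det M[B] * det P[X]\<close>, so pivoting at \<open>B\<close> moves the exchange property at
  \<open>B\<close> to the exchange property at the empty set. For \<open>M = S + w w\<^sup>T\<close> with \<open>S\<close> skew-symmetric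
  the pivot has the same shape \<open>S' + w' w'\<^sup>T\<close>, since it is congruent to a skew-symmetric
  matrix up to a rank-one term. It therefore remains to show: if \<open>M[Y]\<close> is nonsingular and
  \<open>x \<in> Y\<close>, some \<open>y \<in> Y\<close> makes both \<open>M[{x,y}]\<close> and \<open>P[{x,y}]\<close> nonsingular (\<open>P\<close> the pivot
  at \<open>Y\<close>). The \<open>2 \<times> 2\<close> principal minors of \<open>S + w w\<^sup>T\<close> are \<open>S x y\<^sup>2\<close> and \<open>w x\<^sup>2\<close>; if every
  \<open>y\<close> failed, row \<open>x\<close> of the identity \<open>keep_cols M Y * P = keep_cols M (- Y)\<close> would read \<open>1 = 0\<close>.\<close>

section \<open>Principal minors\<close>

definition keep_cols :: "nat \<Rightarrow> 'a::{zero,one} mat \<Rightarrow> nat set \<Rightarrow> 'a mat" where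
  "keep_cols n M X = mat n n (\<lambda>(i,j). if j \<in> X then M $$ (i,j) else if i = j then 1 else 0)"

lemma keep_cols_carrier [simp]: "keep_cols n M X \<in> carrier_mat n n"
  and keep_cols_dim [simp]: "dim_row (keep_cols n M X) = n" "dim_col (keep_cols n M X) = n"
  unfolding keep_cols_def by simp_all

lemma keep_cols_index [simp]:
  "i < n \<Longrightarrow> j < n \<Longrightarrow> keep_cols n M X $$ (i,j) = (if j \<in> X then M $$ (i,j) else if i = j then 1 else 0)"
  unfolding keep_cols_def by simp

lemma keep_cols_empty: "keep_cols n M {} = 1\<^sub>m n"
  by (rule eq_matI) auto

lemma det_permute_rows_cols:
  fixes K :: "'a::comm_ring_1 mat"
  assumes K: "K \<in> carrier_mat n n" and p: "p permutes {0..<n}"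
  shows "det (mat n n (\<lambda>(i,j). K $$ (p i, p j))) = det K"
proof -
  define P where "P = mat n n (\<lambda>(i,j). K $$ (p i, j))"
  have P: "P \<in> carrier_mat n n" unfolding P_def by simp
  have p_lt: "i < n \<Longrightarrow> p i < n" for i
    using permutes_in_image[OF p] by simp
  have "mat n n (\<lambda>(i,j). K $$ (p i, p j)) = transpose_mat (mat n n (\<lambda>(i,j). transpose_mat P $$ (p i, j)))"
    by (rule eq_matI) (auto simp: P_def p_lt)
  then have "det (mat n n (\<lambda>(i,j). K $$ (p i, p j))) = det (mat n n (\<lambda>(i,j). transpose_mat P $$ (p i, j)))"
    by (simp add: det_transpose[of _ n])
  also have "\<dots> = signof p * det (transpose_mat P)"
    by (rule det_permute_rows[OF _ p]) (use P in simp)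
  also have "det (transpose_mat P) = signof p * det K"
    using det_transpose[OF P] det_permute_rows[OF K p] by (simp add: P_def)
  also have "signof p * (signof p * det K) = (signof p * signof p) * det K"
    by (simp add: mult.assoc)
  also have "signof p * signof p = (1::'a)"
    by (metis of_int_1 of_int_mult sign_idempotent)
  finally show ?thesis by simp
qed

lemma bij_betw_pick: "finite X \<Longrightarrow> bij_betw (pick X) {0..<card X} X"
proof -
  assume X: "finite X"
  have inj: "inj_on (pick X) {0..<card X}"
    by (rule inj_onI) (metis atLeastLessThan_iff nat_neq_iff pick_mono_le)
  have "pick X ` {0..<card X} \<subseteq> X" using pick_in_set_le by auto
  moreover have "card (pick X ` {0..<card X}) = card X" using card_image[OF inj] by simp
  ultimately show ?thesis using inj card_subset_eq[OF X] unfolding bij_betw_def by blast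
qed

lemma obtain_permutes_extending_pick:
  assumes X: "X \<subseteq> {0..<n}"
  obtains p where "p permutes {0..<n}" "\<And>i. i < card X \<Longrightarrow> p i = pick X i"
    "\<And>i. card X \<le> i \<Longrightarrow> i < n \<Longrightarrow> p i \<notin> X"
proof -
  let ?k = "card X"
  have fin: "finite X" using X finite_subset by blast
  have k: "?k \<le> n" using card_mono[OF _ X] by simp
  have "card {?k..<n} = card ({0..<n} - X)" using k X fin by (simp add: card_Diff_subset)
  then obtain g where g: "bij_betw g {?k..<n} ({0..<n} - X)"
    using finite_same_card_bij by blast
  define p where "p i = (if i < ?k then pick X i else if i < n then g i else i)" for i
  have low: "bij_betw p {0..<?k} X"
    using bij_betw_pick[OF fin] by (rule bij_betw_cong[THEN iffD1, rotated]) (simp add: p_def)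
  have high: "bij_betw p {?k..<n} ({0..<n} - X)"
    using g by (rule bij_betw_cong[THEN iffD1, rotated]) (simp add: p_def)
  have "bij_betw p ({0..<?k} \<union> {?k..<n}) (X \<union> ({0..<n} - X))"
    by (rule bij_betw_combine[OF low high]) auto
  moreover have "{0..<?k} \<union> {?k..<n} = {0..<n}" "X \<union> ({0..<n} - X) = {0..<n}"
    using k X by auto
  ultimately have "p permutes {0..<n}"
    by (intro bij_imp_permutes) (auto simp: p_def)
  moreover have "p i \<notin> X" if "?k \<le> i" "i < n" for i
    using high that unfolding bij_betw_def by auto
  ultimately show thesis using that by (simp add: p_def)
qed

lemma det_keep_cols:
  fixes M :: "'a::idom mat"
  assumes M: "M \<in> carrier_mat n n" and X: "X \<subseteq> {0..<n}"
  shows "det (keep_cols n M X) = det (submatrix M X X)"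
proof -
  let ?k = "card X"
  obtain p where p: "p permutes {0..<n}" and p_pick: "\<And>i. i < ?k \<Longrightarrow> p i = pick X i"
    and p_out: "\<And>i. ?k \<le> i \<Longrightarrow> i < n \<Longrightarrow> p i \<notin> X"
    using obtain_permutes_extending_pick[OF X] by blast
  have k: "?k \<le> n" using card_mono[OF _ X] by simp
  have "{i. i < n \<and> i \<in> X} = X" using X by auto
  then have card_X: "card {i. i < n \<and> i \<in> X} = ?k" by simp
  have sub: "submatrix M X X \<in> carrier_mat ?k ?k"
    unfolding submatrix_def using M card_X by simp
  have p_lt: "i < n \<Longrightarrow> p i < n" for i using permutes_in_image[OF p] by simp
  have p_in: "i < n \<Longrightarrow> p i \<in> X \<longleftrightarrow> i < ?k" for i
    using p_out p_pick pick_in_set_le by (metis not_le)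
  have p_eq: "p i = p j \<longleftrightarrow> i = j" for i j using permutes_inj[OF p] by (auto dest: injD)
  \<comment> \<open>Listing \<open>X\<close> first makes \<open>keep_cols n M X\<close> block lower triangular with diagonal blocks
    \<open>M[X]\<close> and an identity.\<close>
  define R where "R = mat (n - ?k) ?k (\<lambda>(i,j). M $$ (p (?k + i), p j))"
  have blocks: "mat n n (\<lambda>(i,j). keep_cols n M X $$ (p i, p j))
      = four_block_mat (submatrix M X X) (0\<^sub>m ?k (n - ?k)) R (1\<^sub>m (n - ?k))"
  proof (rule eq_matI)
    fix i j assume "i < dim_row (four_block_mat (submatrix M X X) (0\<^sub>m ?k (n - ?k)) R (1\<^sub>m (n - ?k)))"
      "j < dim_col (four_block_mat (submatrix M X X) (0\<^sub>m ?k (n - ?k)) R (1\<^sub>m (n - ?k)))"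
    then have ij: "i < n" "j < n" using sub k by auto
    have "submatrix M X X $$ (i,j) = M $$ (p i, p j)" if "i < ?k" "j < ?k"
      using submatrix_index[of i M X j X] M card_X that p_pick by simp
    then show "mat n n (\<lambda>(i,j). keep_cols n M X $$ (p i, p j)) $$ (i,j)
      = four_block_mat (submatrix M X X) (0\<^sub>m ?k (n - ?k)) R (1\<^sub>m (n - ?k)) $$ (i,j)"
      using ij sub k by (auto simp: p_lt p_in p_eq R_def)
  qed (use sub k in auto)
  have "det (keep_cols n M X) = det (mat n n (\<lambda>(i,j). keep_cols n M X $$ (p i, p j)))"
    by (rule det_permute_rows_cols[OF keep_cols_carrier p, symmetric])
  also have "\<dots> = det (four_block_mat (submatrix M X X) (0\<^sub>m ?k (n - ?k)) R (1\<^sub>m (n - ?k)))"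
    unfolding blocks ..
  also have "\<dots> = det (submatrix M X X)"
    using det_four_block_mat_upper_right_zero[OF sub refl, of R "n - ?k"] by (simp add: R_def)
  finally show ?thesis .
qed

section \<open>Principal pivot transform\<close>

text \<open>The inverse via the adjugate; a junk value when \<open>det K = 0\<close>.\<close>
definition mat_inv :: "'a::field mat \<Rightarrow> 'a mat" where
  "mat_inv K = (1 / det K) \<cdot>\<^sub>m adj_mat K"

lemma mat_inv_carrier [simp]: "K \<in> carrier_mat n n \<Longrightarrow> mat_inv K \<in> carrier_mat n n"
  unfolding mat_inv_def by (rule smult_carrier_mat, rule adj_mat(1))

lemma mat_inv:
  fixes K :: "'a::field mat"
  assumes K: "K \<in> carrier_mat n n" and det: "det K \<noteq> 0"
  shows "K * mat_inv K = 1\<^sub>m n" "mat_inv K * K = 1\<^sub>m n"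
proof -
  have inv: "mat_inv K \<in> carrier_mat n n" using K by simp
  have "K * mat_inv K = (1 / det K) \<cdot>\<^sub>m (K * adj_mat K)"
    unfolding mat_inv_def using adj_mat(1)[OF K] K by (simp add: mult_smult_distrib)
  also have "\<dots> = 1\<^sub>m n" unfolding adj_mat(2)[OF K] using det by (intro eq_matI) auto
  finally show "K * mat_inv K = 1\<^sub>m n" .
  then show "mat_inv K * K = 1\<^sub>m n" using mat_mult_left_right_inverse[OF K inv] by simp
qed

text \<open>Tucker's principal pivot transform of \<open>M\<close> at \<open>X\<close>: the unique \<open>N\<close> with
  \<open>keep_cols n M X * N = keep_cols n M (- X)\<close> when \<open>M[X]\<close> is nonsingular.\<close>
definition pivot :: "nat \<Rightarrow> 'a::field mat \<Rightarrow> nat set \<Rightarrow> 'a mat" where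
  "pivot n M X = mat_inv (keep_cols n M X) * keep_cols n M (- X)"

lemma pivot_carrier [simp]: "pivot n M X \<in> carrier_mat n n"
  unfolding pivot_def by (rule mult_carrier_mat[OF mat_inv_carrier[OF keep_cols_carrier] keep_cols_carrier])

lemma pivot_dim [simp]: "dim_row (pivot n M X) = n" "dim_col (pivot n M X) = n"
  using pivot_carrier by blast+

lemma keep_cols_mult_pivot:
  assumes "det (keep_cols n M X) \<noteq> 0"
  shows "keep_cols n M X * pivot n M X = keep_cols n M (- X)"
  unfolding pivot_def
  using mat_inv(1)[OF keep_cols_carrier assms]
  by (simp add: assoc_mult_mat[symmetric, of _ n n _ n _ n])

lemma keep_cols_symdiff_eq_mult_pivot:
  assumes det: "det (keep_cols n M B) \<noteq> 0"
  shows "keep_cols n M (B \<triangle> X) = keep_cols n M B * keep_cols n (pivot n M B) X"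
proof (rule eq_matI)
  fix i j assume "i < dim_row (keep_cols n M B * keep_cols n (pivot n M B) X)"
    "j < dim_col (keep_cols n M B * keep_cols n (pivot n M B) X)"
  then have ij: "i < n" "j < n" by auto
  have col: "col (keep_cols n (pivot n M B) X) j = (if j \<in> X then col (pivot n M B) j else unit_vec n j)"
    using ij by (intro eq_vecI) auto
  have "(keep_cols n M B * keep_cols n (pivot n M B) X) $$ (i,j)
      = (if j \<in> X then (keep_cols n M B * pivot n M B) $$ (i,j) else keep_cols n M B $$ (i,j))"
    using ij by (simp add: col)
  also have "\<dots> = keep_cols n M (B \<triangle> X) $$ (i,j)"
    using ij by (auto simp: keep_cols_mult_pivot[OF det] symdiff_def)
  finally show "keep_cols n M (B \<triangle> X) $$ (i,j) = (keep_cols n M B * keep_cols n (pivot n M B) X) $$ (i,j)"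
    by simp
qed auto

lemma det_keep_cols_symdiff:
  assumes "det (keep_cols n M B) \<noteq> 0"
  shows "det (keep_cols n M (B \<triangle> X)) = det (keep_cols n M B) * det (keep_cols n (pivot n M B) X)"
  unfolding keep_cols_symdiff_eq_mult_pivot[OF assms] by (rule det_mult) auto

lemma keep_cols_pivot_self:
  assumes det: "det (keep_cols n M B) \<noteq> 0"
  shows "keep_cols n (pivot n M B) B = mat_inv (keep_cols n M B)"
proof -
  let ?K = "keep_cols n M B" and ?P = "keep_cols n (pivot n M B) B"
  have KP: "?K * ?P = 1\<^sub>m n"
    using keep_cols_symdiff_eq_mult_pivot[OF det, of B] by (simp add: symdiff_def keep_cols_empty)
  have "?P = (mat_inv ?K * ?K) * ?P"
    using mat_inv(2)[OF keep_cols_carrier det] by simp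
  also have "\<dots> = mat_inv ?K * (?K * ?P)"
    by (rule assoc_mult_mat[of _ n n _ n _ n]) auto
  finally show ?thesis
    unfolding KP using right_mult_one_mat[OF mat_inv_carrier[OF keep_cols_carrier]] by simp
qed

section \<open>Skew-symmetric plus rank one\<close>

lemma skew_symmetric_matD:
  assumes "skew_symmetric_mat n S"
  shows "S \<in> carrier_mat n n" "i < n \<Longrightarrow> j < n \<Longrightarrow> S $$ (i,j) = - S $$ (j,i)" "i < n \<Longrightarrow> S $$ (i,i) = 0"
  using assms unfolding skew_symmetric_mat_def by blast+

lemma outer_self_carrier [simp]: "w \<in> carrier_vec n \<Longrightarrow> outer_self w \<in> carrier_mat n n"
  unfolding outer_self_def by simp

lemma outer_self_dim [simp]: "dim_row (outer_self w) = dim_vec w" "dim_col (outer_self w) = dim_vec w"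
  unfolding outer_self_def by simp_all

lemma outer_self_index [simp]:
  "i < dim_vec w \<Longrightarrow> j < dim_vec w \<Longrightarrow> outer_self w $$ (i,j) = w $ i * w $ j"
  unfolding outer_self_def by simp

lemma scalar_prod_mult_mat_vec_double_sum:
  fixes T :: "'a::comm_ring_1 mat"
  assumes "T \<in> carrier_mat n n" "u \<in> carrier_vec n" "u' \<in> carrier_vec n"
  shows "u \<bullet> (T *\<^sub>v u') = (\<Sum>i<n. \<Sum>j<n. u $ i * T $$ (i,j) * u' $ j)"
  using assms
  by (simp add: scalar_prod_def mult_mat_vec_def lessThan_atLeast0 sum_distrib_left mult.assoc)

text \<open>The diagonal hypothesis does not follow from antisymmetry in characteristic 2.\<close>
lemma double_sum_skew_eq_zero:
  fixes f :: "nat \<Rightarrow> nat \<Rightarrow> 'a::ab_group_add"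
  assumes "\<And>i j. i < m \<Longrightarrow> j < m \<Longrightarrow> f i j = - f j i" "\<And>i. i < m \<Longrightarrow> f i i = 0"
  shows "(\<Sum>i<m. \<Sum>j<m. f i j) = 0"
  using assms
proof (induction m)
  case (Suc m)
  have IH: "(\<Sum>i<m. \<Sum>j<m. f i j) = 0"
    using Suc.IH[OF Suc.prems(1)[OF less_SucI less_SucI] Suc.prems(2)[OF less_SucI]] .
  have "(\<Sum>i<Suc m. \<Sum>j<Suc m. f i j) = (\<Sum>i<m. (\<Sum>j<m. f i j) + f i m) + ((\<Sum>j<m. f m j) + f m m)"
    by simp
  also have "\<dots> = (\<Sum>i<m. \<Sum>j<m. f i j) + (\<Sum>i<m. f i m + f m i) + f m m"
    by (simp add: sum.distrib)
  also have "(\<Sum>i<m. f i m + f m i) = 0"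
  proof (rule sum.neutral, intro ballI)
    fix i assume "i \<in> {..<m}"
    then show "f i m + f m i = 0" using Suc.prems(1)[of i m] by simp
  qed
  finally show ?case using IH Suc.prems(2)[of m] by simp
qed simp

lemma skew_symmetric_scalar_prod_self:
  fixes T :: "'a::comm_ring_1 mat"
  assumes T: "skew_symmetric_mat n T" and u: "u \<in> carrier_vec n"
  shows "u \<bullet> (T *\<^sub>v u) = 0"
  unfolding scalar_prod_mult_mat_vec_double_sum[OF skew_symmetric_matD(1)[OF T] u u]
proof (rule double_sum_skew_eq_zero)
  fix i j assume "i < n" "j < n"
  then show "u $ i * T $$ (i,j) * u $ j = - (u $ j * T $$ (j,i) * u $ i)"
    using skew_symmetric_matD(2)[OF T, of i j] by simp
next
  fix i assume "i < n"
  then show "u $ i * T $$ (i,i) * u $ i = 0" using skew_symmetric_matD(3)[OF T] by simp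
qed

lemma skew_symmetric_scalar_prod_swap:
  fixes T :: "'a::comm_ring_1 mat"
  assumes T: "skew_symmetric_mat n T" and u: "u \<in> carrier_vec n" and u': "u' \<in> carrier_vec n"
  shows "u \<bullet> (T *\<^sub>v u') = - (u' \<bullet> (T *\<^sub>v u))"
proof -
  have "(\<Sum>i<n. \<Sum>j<n. u $ i * T $$ (i,j) * u' $ j) = (\<Sum>j<n. \<Sum>i<n. - (u' $ j * T $$ (j,i) * u $ i))"
  proof (subst sum.swap, intro sum.cong refl)
    fix i j assume "i \<in> {..<n}" "j \<in> {..<n}"
    then show "u $ j * T $$ (j,i) * u' $ i = - (u' $ i * T $$ (i,j) * u $ j)"
      using skew_symmetric_matD(2)[OF T, of j i] by simp
  qed
  then show ?thesis
    unfolding scalar_prod_mult_mat_vec_double_sum[OF skew_symmetric_matD(1)[OF T] u u']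
      scalar_prod_mult_mat_vec_double_sum[OF skew_symmetric_matD(1)[OF T] u' u]
    by (simp add: sum_negf)
qed

lemma congruence_index:
  fixes G T :: "'a::comm_ring_1 mat"
  assumes G: "G \<in> carrier_mat n n" and T: "T \<in> carrier_mat n n" and "i < n" "j < n"
  shows "(G * T * transpose_mat G) $$ (i,j) = row G i \<bullet> (T *\<^sub>v row G j)"
proof -
  have "G * T * transpose_mat G = G * (T * transpose_mat G)"
    using G T by (intro assoc_mult_mat) auto
  moreover have "col (T * transpose_mat G) j = T *\<^sub>v row G j"
    using assms by (simp add: mult_mat_vec_def)
  ultimately show ?thesis using assms by simp
qed

lemma skew_symmetric_congruence:
  fixes G T :: "'a::comm_ring_1 mat"
  assumes T: "skew_symmetric_mat n T" and G: "G \<in> carrier_mat n n"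
  shows "skew_symmetric_mat n (G * T * transpose_mat G)"
proof -
  note T_carrier = skew_symmetric_matD(1)[OF T]
  have "(G * T * transpose_mat G) $$ (i,j) = - (G * T * transpose_mat G) $$ (j,i)" if "i < n" "j < n" for i j
    unfolding congruence_index[OF G T_carrier that] congruence_index[OF G T_carrier that(2,1)]
    using G that by (intro skew_symmetric_scalar_prod_swap[OF T]) auto
  moreover have "(G * T * transpose_mat G) $$ (i,i) = 0" if "i < n" for i
    unfolding congruence_index[OF G T_carrier that that]
    using G that by (intro skew_symmetric_scalar_prod_self[OF T]) auto
  moreover have "G * T * transpose_mat G \<in> carrier_mat n n" using G T_carrier by simp
  ultimately show ?thesis
    unfolding skew_symmetric_mat_def by blast
qed

lemma outer_self_congruence:
  fixes G :: "'a::comm_ring_1 mat"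
  assumes G: "G \<in> carrier_mat n n" and w: "w \<in> carrier_vec n"
  shows "G * outer_self w * transpose_mat G = outer_self (G *\<^sub>v w)"
proof (rule eq_matI)
  have dims: "dim_vec w = n" "dim_vec (G *\<^sub>v w) = n" using G w by auto
  fix i j assume "i < dim_row (outer_self (G *\<^sub>v w))" "j < dim_col (outer_self (G *\<^sub>v w))"
  then have ij: "i < n" "j < n" using dims by (auto simp: outer_self_def)
  have "(G * outer_self w * transpose_mat G) $$ (i,j) = row G i \<bullet> (outer_self w *\<^sub>v row G j)"
    by (rule congruence_index[OF G _ ij]) (use w in simp)
  also have "\<dots> = (\<Sum>a<n. \<Sum>b<n. row G i $ a * outer_self w $$ (a,b) * row G j $ b)"
    by (rule scalar_prod_mult_mat_vec_double_sum) (use G w ij in auto)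
  also have "\<dots> = (\<Sum>a<n. \<Sum>b<n. (G $$ (i,a) * w $ a) * (G $$ (j,b) * w $ b))"
    using G ij dims by (intro sum.cong refl) (simp add: ac_simps)
  also have "\<dots> = (\<Sum>a<n. G $$ (i,a) * w $ a) * (\<Sum>b<n. G $$ (j,b) * w $ b)"
    by (simp add: sum_product)
  also have "\<dots> = outer_self (G *\<^sub>v w) $$ (i,j)"
    using G w ij dims by (simp add: mult_mat_vec_def scalar_prod_def lessThan_atLeast0)
  finally show "(G * outer_self w * transpose_mat G) $$ (i,j) = outer_self (G *\<^sub>v w) $$ (i,j)" .
next
  show "dim_row (G * outer_self w * transpose_mat G) = dim_row (outer_self (G *\<^sub>v w))"
    "dim_col (G * outer_self w * transpose_mat G) = dim_col (outer_self (G *\<^sub>v w))"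
    using G by (simp_all add: outer_self_def)
qed

lemma keep_cols_compl_mult_transpose_index:
  fixes M :: "'a::comm_ring_1 mat"
  assumes i: "i < n" and j: "j < n"
  shows "(keep_cols n M (- Y) * transpose_mat (keep_cols n M Y)) $$ (i,j)
       = (if i \<in> Y then M $$ (j,i) else 0) + (if j \<notin> Y then M $$ (i,j) else 0)"
proof -
  have "(keep_cols n M (- Y) * transpose_mat (keep_cols n M Y)) $$ (i,j)
      = (\<Sum>k<n. keep_cols n M (- Y) $$ (i,k) * keep_cols n M Y $$ (j,k))"
    using i j by (simp add: scalar_prod_def lessThan_atLeast0)
  also have "\<dots> = (\<Sum>k<n. (if k = i then (if i \<in> Y then M $$ (j,i) else 0) else 0)
                        + (if k = j then (if j \<notin> Y then M $$ (i,j) else 0) else 0))"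
    using i j by (intro sum.cong refl) auto
  also have "\<dots> = (if i \<in> Y then M $$ (j,i) else 0) + (if j \<notin> Y then M $$ (i,j) else 0)"
    using i j by (simp add: sum.distrib)
  finally show ?thesis .
qed

lemma pivot_eq_congruence:
  fixes M :: "'a::field mat"
  assumes det: "det (keep_cols n M Y) \<noteq> 0"
  shows "pivot n M Y = mat_inv (keep_cols n M Y) * (keep_cols n M (- Y) * transpose_mat (keep_cols n M Y))
                        * transpose_mat (mat_inv (keep_cols n M Y))"
proof -
  let ?K = "keep_cols n M Y" and ?L = "keep_cols n M (- Y)" and ?G = "mat_inv (keep_cols n M Y)"
  have G: "?G \<in> carrier_mat n n" "?G * ?K = 1\<^sub>m n"
    using mat_inv(2)[OF keep_cols_carrier det] by auto
  have "?G * (?L * transpose_mat ?K) * transpose_mat ?G = ?G * (?L * transpose_mat ?K * transpose_mat ?G)"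
    by (rule assoc_mult_mat[of _ n n _ n _ n]) (use G in auto)
  also have "?L * transpose_mat ?K * transpose_mat ?G = ?L * (transpose_mat ?K * transpose_mat ?G)"
    by (rule assoc_mult_mat[of _ n n _ n _ n]) (use G in auto)
  also have "transpose_mat ?K * transpose_mat ?G = 1\<^sub>m n"
    using transpose_mult[of ?G n n ?K n] G by simp
  finally show ?thesis unfolding pivot_def by simp
qed

lemma skew_symmetric_keep_cols_compl_mult_transpose:
  fixes S :: "'a::comm_ring_1 mat"
  assumes S: "skew_symmetric_mat n S" and w: "w \<in> carrier_vec n"
  shows "skew_symmetric_mat n (keep_cols n (S + outer_self w) (- Y)
           * transpose_mat (keep_cols n (S + outer_self w) Y) - outer_self w)"
    (is "skew_symmetric_mat n ?T")
proof -
  define M where "M = S + outer_self w"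
  have M_index: "M $$ (i,j) = S $$ (i,j) + w $ i * w $ j" if "i < n" "j < n" for i j
    unfolding M_def using skew_symmetric_matD(1)[OF S] w that by simp
  have T_index: "?T $$ (i,j) = (if i \<in> Y then M $$ (j,i) else 0) + (if j \<notin> Y then M $$ (i,j) else 0)
                                - w $ i * w $ j" if "i < n" "j < n" for i j
    using that w keep_cols_compl_mult_transpose_index[OF that, of M Y] by (simp add: M_def)
  show ?thesis
    unfolding skew_symmetric_mat_def
  proof (intro conjI allI impI)
    show "?T \<in> carrier_mat n n" using w by (intro carrier_matI) simp_all
  next
    fix i j assume ij: "i < n" "j < n"
    show "?T $$ (i,j) = - ?T $$ (j,i)"
      unfolding T_index[OF ij] T_index[OF ij(2,1)] M_index[OF ij] M_index[OF ij(2,1)]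
      using skew_symmetric_matD(2)[OF S ij]
      by (cases "i \<in> Y"; cases "j \<in> Y") (simp_all add: algebra_simps)
  next
    fix i assume i: "i < n"
    show "?T $$ (i,i) = 0"
      unfolding T_index[OF i i] M_index[OF i i] using skew_symmetric_matD(3)[OF S i] by simp
  qed
qed

lemma pivot_skew_plus_outer_self:
  fixes S :: "'a::field mat"
  assumes S: "skew_symmetric_mat n S" and w: "w \<in> carrier_vec n"
    and det: "det (keep_cols n (S + outer_self w) Y) \<noteq> 0"
  shows "\<exists>S'. skew_symmetric_mat n S' \<and>
    pivot n (S + outer_self w) Y = S' + outer_self (mat_inv (keep_cols n (S + outer_self w) Y) *\<^sub>v w)"
proof -
  let ?M = "S + outer_self w"
  let ?K = "keep_cols n ?M Y" and ?L = "keep_cols n ?M (- Y)" and ?G = "mat_inv (keep_cols n ?M Y)"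
  have G: "?G \<in> carrier_mat n n" by simp
  have "?G * (?L * transpose_mat ?K - outer_self w) * transpose_mat ?G
      = (?G * (?L * transpose_mat ?K) - ?G * outer_self w) * transpose_mat ?G"
    by (subst mult_minus_distrib_mat[of ?G n n]) (use w G in \<open>auto intro!: mult_carrier_mat\<close>)
  also have "\<dots> = ?G * (?L * transpose_mat ?K) * transpose_mat ?G - ?G * outer_self w * transpose_mat ?G"
    by (rule minus_mult_distrib_mat[of _ n n _ _ n]) (use w G in \<open>auto intro!: mult_carrier_mat\<close>)
  also have "\<dots> = pivot n ?M Y - outer_self (?G *\<^sub>v w)"
    unfolding pivot_eq_congruence[OF det] outer_self_congruence[OF G w] ..
  finally have congruent: "?G * (?L * transpose_mat ?K - outer_self w) * transpose_mat ?G
      = pivot n ?M Y - outer_self (?G *\<^sub>v w)" .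
  have "skew_symmetric_mat n (pivot n ?M Y - outer_self (?G *\<^sub>v w))"
    using skew_symmetric_congruence[OF skew_symmetric_keep_cols_compl_mult_transpose[OF S w, of Y] G]
    unfolding congruent .
  moreover have "pivot n ?M Y = (pivot n ?M Y - outer_self (?G *\<^sub>v w)) + outer_self (?G *\<^sub>v w)"
    using w carrier_matD[OF G] by (intro eq_matI) auto
  ultimately show ?thesis by blast
qed

section \<open>Exchange\<close>

lemma det_carrier_mat_2:
  fixes A :: "'a::comm_ring_1 mat"
  assumes A: "A \<in> carrier_mat 2 2"
  shows "det A = A $$ (0,0) * A $$ (1,1) - A $$ (0,1) * A $$ (1,0)"
proof -
  have "det A = A $$ (0,0) * cofactor A 0 0 + A $$ (0,1) * cofactor A 0 1"
    using laplace_expansion_row[OF A, of 0] by (simp add: numeral_2_eq_2)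
  moreover have "cofactor A 0 0 = A $$ (1,1)" "cofactor A 0 1 = - A $$ (1,0)"
    unfolding cofactor_def using A by (subst det_single; auto simp: mat_delete_def)+
  ultimately show ?thesis by simp
qed

lemma pick_singleton: "pick {x} 0 = x"
  by (simp, rule Least_equality) auto

lemma pick_pair:
  assumes "x < y"
  shows "pick {x,y} 0 = x" "pick {x,y} 1 = y"
proof -
  show first: "pick {x,y} 0 = x" using assms by (simp, intro Least_equality) auto
  show "pick {x,y} 1 = y" using assms first by (simp, intro Least_equality) auto
qed

lemma det_submatrix_singleton:
  fixes N :: "'a::comm_ring_1 mat"
  assumes N: "N \<in> carrier_mat n n" and x: "x < n"
  shows "det (submatrix N {x} {x}) = N $$ (x,x)"
proof -
  have "{i. i < n \<and> i \<in> {x}} = {x}" using x by auto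
  then have card: "card {i. i < n \<and> i \<in> {x}} = 1" by simp
  then have "submatrix N {x} {x} \<in> carrier_mat 1 1" unfolding submatrix_def using N by simp
  then have "det (submatrix N {x} {x}) = submatrix N {x} {x} $$ (0,0)" by (rule det_single)
  also have "\<dots> = N $$ (x,x)" using submatrix_index[of 0 N "{x}" 0 "{x}"] N card pick_singleton by simp
  finally show ?thesis .
qed

lemma det_submatrix_pair:
  fixes N :: "'a::comm_ring_1 mat"
  assumes N: "N \<in> carrier_mat n n" and xy: "x < y" and y: "y < n"
  shows "det (submatrix N {x,y} {x,y}) = N $$ (x,x) * N $$ (y,y) - N $$ (x,y) * N $$ (y,x)"
proof -
  have "{i. i < n \<and> i \<in> {x,y}} = {x,y}" using xy y by auto
  then have card: "card {i. i < n \<and> i \<in> {x,y}} = 2" using xy by simp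
  have "submatrix N {x,y} {x,y} \<in> carrier_mat 2 2" unfolding submatrix_def using N card by simp
  then have "det (submatrix N {x,y} {x,y})
      = submatrix N {x,y} {x,y} $$ (0,0) * submatrix N {x,y} {x,y} $$ (1,1)
      - submatrix N {x,y} {x,y} $$ (0,1) * submatrix N {x,y} {x,y} $$ (1,0)"
    by (rule det_carrier_mat_2)
  also have "\<dots> = N $$ (x,x) * N $$ (y,y) - N $$ (x,y) * N $$ (y,x)"
    using submatrix_index[of _ N "{x,y}" _ "{x,y}"] N card pick_pair[OF xy] by simp
  finally show ?thesis .
qed

lemma det_keep_cols_pair_skew_plus_outer_self:
  fixes S :: "'a::idom mat"
  assumes S: "skew_symmetric_mat n S" and w: "w \<in> carrier_vec n" and x: "x < n" and y: "y < n"
  shows "det (keep_cols n (S + outer_self w) {x,y})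
       = (if x = y then w $ x * w $ x else S $$ (x,y) * S $$ (x,y))"
proof -
  have N: "S + outer_self w \<in> carrier_mat n n" using skew_symmetric_matD(1)[OF S] w by simp
  have index: "(S + outer_self w) $$ (i,j) = S $$ (i,j) + w $ i * w $ j" if "i < n" "j < n" for i j
    using skew_symmetric_matD(1)[OF S] w that by simp
  have ordered: "det (keep_cols n (S + outer_self w) {a,b}) = S $$ (a,b) * S $$ (a,b)"
    if ab: "a < b" "b < n" for a b
    using det_keep_cols[OF N, of "{a,b}"] det_submatrix_pair[OF N ab] ab
      index[of a a] index[of b b] index[of a b] index[of b a]
      skew_symmetric_matD(2)[OF S, of b a] skew_symmetric_matD(3)[OF S, of a] skew_symmetric_matD(3)[OF S, of b]
    by (simp add: algebra_simps)
  show ?thesis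
  proof (cases x y rule: linorder_cases)
    case less
    then show ?thesis using ordered[OF less y] by simp
  next
    case equal
    then show ?thesis
      using det_keep_cols[OF N, of "{x}"] det_submatrix_singleton[OF N x] index[OF x x]
        skew_symmetric_matD(3)[OF S x] x by simp
  next
    case greater
    then show ?thesis
      using ordered[OF greater x] skew_symmetric_matD(2)[OF S x y] by (simp add: insert_commute)
  qed
qed

lemma keep_cols_mult_mat_vec_index:
  assumes Y: "Y \<subseteq> {0..<n}" and x: "x \<in> Y" and v: "v \<in> carrier_vec n"
  shows "(keep_cols n M Y *\<^sub>v v) $ x = (\<Sum>k\<in>Y. M $$ (x,k) * v $ k)"
proof -
  have "(keep_cols n M Y *\<^sub>v v) $ x = (\<Sum>k\<in>{0..<n}. keep_cols n M Y $$ (x,k) * v $ k)"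
    using Y x v by (auto simp: scalar_prod_def)
  also have "\<dots> = (\<Sum>k\<in>{0..<n}. if k \<in> Y then M $$ (x,k) * v $ k else 0)"
    using Y x by (intro sum.cong) auto
  also have "\<dots> = (\<Sum>k\<in>Y. M $$ (x,k) * v $ k)"
    using Y by (simp add: sum.inter_restrict[symmetric] Int_absorb1)
  finally show ?thesis .
qed

lemma pivot_row_sums:
  fixes M :: "'a::field mat"
  assumes det: "det (keep_cols n M Y) \<noteq> 0" and Y: "Y \<subseteq> {0..<n}" and x: "x \<in> Y"
    and w: "w \<in> carrier_vec n"
  shows "(\<Sum>k\<in>Y. M $$ (x,k) * pivot n M Y $$ (k,x)) = 1"
    and "(\<Sum>k\<in>Y. M $$ (x,k) * (mat_inv (keep_cols n M Y) *\<^sub>v w) $ k) = w $ x"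
    and "(\<Sum>k\<in>Y. pivot n M Y $$ (x,k) * w $ k) = (mat_inv (keep_cols n M Y) *\<^sub>v w) $ x"
proof -
  let ?K = "keep_cols n M Y" and ?G = "mat_inv (keep_cols n M Y)" and ?P = "pivot n M Y"
  have xn: "x < n" using x Y by auto
  have "(\<Sum>k\<in>Y. M $$ (x,k) * ?P $$ (k,x)) = (\<Sum>k\<in>Y. M $$ (x,k) * col ?P x $ k)"
    using Y xn by (intro sum.cong) auto
  also have "\<dots> = (?K *\<^sub>v col ?P x) $ x"
    by (rule keep_cols_mult_mat_vec_index[OF Y x col_carrier_vec[OF xn pivot_carrier], symmetric])
  also have "\<dots> = (?K * ?P) $$ (x,x)" using xn by simp
  also have "\<dots> = 1" using keep_cols_mult_pivot[OF det] xn x by simp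
  finally show "(\<Sum>k\<in>Y. M $$ (x,k) * ?P $$ (k,x)) = 1" .
  have Gw: "?G *\<^sub>v w \<in> carrier_vec n"
    by (rule mult_mat_vec_carrier[OF mat_inv_carrier[OF keep_cols_carrier] w])
  have "?K *\<^sub>v (?G *\<^sub>v w) = w"
    using mat_inv(1)[OF keep_cols_carrier det] w
    by (simp add: assoc_mult_mat_vec[symmetric, of _ n n _ n])
  then show "(\<Sum>k\<in>Y. M $$ (x,k) * (?G *\<^sub>v w) $ k) = w $ x"
    using keep_cols_mult_mat_vec_index[OF Y x Gw, of M] by simp
  show "(\<Sum>k\<in>Y. ?P $$ (x,k) * w $ k) = (?G *\<^sub>v w) $ x"
    using keep_cols_mult_mat_vec_index[OF Y x w, of ?P] by (simp add: keep_cols_pivot_self[OF det])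
qed

text \<open>For \<open>M = S + w w\<^sup>T\<close> with pivot \<open>S' + w' w'\<^sup>T\<close> at \<open>Y \<ni> x\<close>, take \<open>a k = S x k\<close>,
  \<open>b k = S' k x\<close>, \<open>u = w\<close>, \<open>u' = w'\<close>, \<open>c = w x\<close>, \<open>c' = w' x\<close>: the first three hypotheses are
  \<open>pivot_row_sums\<close>, the last two say that no \<open>y \<in> Y\<close> gives an exchange.\<close>
lemma exchange_identities_inconsistent:
  fixes a b u u' :: "nat \<Rightarrow> 'a::comm_ring_1"
  assumes one: "(\<Sum>k\<in>Y. (a k + c * u k) * (b k + u' k * c')) = 1"
    and left: "(\<Sum>k\<in>Y. (a k + c * u k) * u' k) = c"
    and right: "(\<Sum>k\<in>Y. (- b k + c' * u' k) * u k) = c'"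
    and ab: "\<And>k. k \<in> Y \<Longrightarrow> a k * b k = 0" and cc': "c * c' = 0"
  shows False
proof -
  have "(\<Sum>k\<in>Y. (a k + c * u k) * (b k + u' k * c'))
      = (\<Sum>k\<in>Y. a k * b k) + c * (\<Sum>k\<in>Y. u k * b k) + c' * (\<Sum>k\<in>Y. (a k + c * u k) * u' k)"
    by (simp add: algebra_simps sum.distrib sum_distrib_left)
  also have "(\<Sum>k\<in>Y. a k * b k) = 0" using ab by simp
  also have "c * (\<Sum>k\<in>Y. u k * b k) = c * c' * (\<Sum>k\<in>Y. u' k * u k) - c * c'"
  proof -
    have "c * c' = c * (\<Sum>k\<in>Y. (- b k + c' * u' k) * u k)" unfolding right ..
    also have "\<dots> = c * c' * (\<Sum>k\<in>Y. u' k * u k) - c * (\<Sum>k\<in>Y. u k * b k)"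
      by (simp add: algebra_simps sum.distrib sum_distrib_left sum_subtractf)
    finally show ?thesis by (simp add: algebra_simps)
  qed
  finally have "(1::'a) = 0" using one left cc' by (simp add: algebra_simps)
  then show False by simp
qed

lemma exchange_skew_plus_outer_self:
  fixes S :: "'a::field mat"
  assumes S: "skew_symmetric_mat n S" and w: "w \<in> carrier_vec n" and Y: "Y \<subseteq> {0..<n}"
    and det: "det (keep_cols n (S + outer_self w) Y) \<noteq> 0" and x: "x \<in> Y"
  shows "\<exists>y\<in>Y. det (keep_cols n (S + outer_self w) {x,y}) \<noteq> 0
              \<and> det (keep_cols n (S + outer_self w) (Y \<triangle> {x,y})) \<noteq> 0"
proof (rule ccontr)
  assume no_exchange: "\<not> ?thesis"
  define M where "M = S + outer_self w"
  define w' where "w' = mat_inv (keep_cols n M Y) *\<^sub>v w"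
  obtain S' where S': "skew_symmetric_mat n S'" and P: "pivot n M Y = S' + outer_self w'"
    using pivot_skew_plus_outer_self[OF S w det] unfolding M_def w'_def by blast
  have w': "w' \<in> carrier_vec n"
    unfolding w'_def by (rule mult_mat_vec_carrier[OF mat_inv_carrier[OF keep_cols_carrier] w])
  have lt: "k \<in> Y \<Longrightarrow> k < n" for k using Y by auto
  have no_pair: "det (keep_cols n M {x,k}) = 0 \<or> det (keep_cols n (pivot n M Y) {x,k}) = 0"
    if "k \<in> Y" for k
    using no_exchange that det_keep_cols_symdiff[of n M Y "{x,k}"] det unfolding M_def by auto
  have singular: "(if x = k then w $ x * w $ x else S $$ (x,k) * S $$ (x,k)) = 0
      \<or> (if x = k then w' $ x * w' $ x else S' $$ (x,k) * S' $$ (x,k)) = 0" if "k \<in> Y" for k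
    using no_pair[OF that, unfolded P, unfolded M_def
        det_keep_cols_pair_skew_plus_outer_self[OF S w lt[OF x] lt[OF that]]
        det_keep_cols_pair_skew_plus_outer_self[OF S' w' lt[OF x] lt[OF that]]] .
  have M_row: "M $$ (x,k) = S $$ (x,k) + w $ x * w $ k" if "k \<in> Y" for k
    unfolding M_def using skew_symmetric_matD(1)[OF S] w lt[OF x] lt[OF that] by simp
  have P_row: "pivot n M Y $$ (x,k) = - S' $$ (k,x) + w' $ x * w' $ k" if "k \<in> Y" for k
    unfolding P using skew_symmetric_matD(1)[OF S'] skew_symmetric_matD(2)[OF S' lt[OF x] lt[OF that]]
      w' lt[OF x] lt[OF that] by simp
  have P_col: "pivot n M Y $$ (k,x) = S' $$ (k,x) + w' $ k * w' $ x" if "k \<in> Y" for k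
    unfolding P using skew_symmetric_matD(1)[OF S'] w' lt[OF x] lt[OF that] by simp
  note sums = pivot_row_sums[OF det[folded M_def] Y x w, folded w'_def]
  show False
  proof (rule exchange_identities_inconsistent)
    show "(\<Sum>k\<in>Y. (S $$ (x,k) + w $ x * w $ k) * (S' $$ (k,x) + w' $ k * w' $ x)) = 1"
      using sums(1) by (simp add: M_row P_col cong: sum.cong)
    show "(\<Sum>k\<in>Y. (S $$ (x,k) + w $ x * w $ k) * w' $ k) = w $ x"
      using sums(2) by (simp add: M_row cong: sum.cong)
    show "(\<Sum>k\<in>Y. (- S' $$ (k,x) + w' $ x * w' $ k) * w $ k) = w' $ x"
      using sums(3) by (simp add: P_row cong: sum.cong)
    show "S $$ (x,k) * S' $$ (k,x) = 0" if "k \<in> Y" for k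
      using singular[OF that] skew_symmetric_matD(2)[OF S' lt[OF that] lt[OF x]]
        skew_symmetric_matD(3)[OF S lt[OF x]]
      by (cases "x = k") auto
    show "w $ x * w' $ x = 0"
      using singular[OF x] by simp
  qed
qed

lemma strong_exchange_skew_plus_outer_self:
  fixes S :: "'a::field mat"
  assumes S: "skew_symmetric_mat n S" and w: "w \<in> carrier_vec n"
  defines "\<B> \<equiv> {I. I \<subseteq> {0..<n} \<and> det (keep_cols n (S + outer_self w) I) \<noteq> 0}"
  assumes B: "B \<in> \<B>" and B': "B' \<in> \<B>" and x: "x \<in> B \<triangle> B'"
  shows "\<exists>y\<in>B \<triangle> B'. B \<triangle> {x,y} \<in> \<B> \<and> B' \<triangle> {x,y} \<in> \<B>"
proof -
  let ?M = "S + outer_self w" and ?Y = "B \<triangle> B'"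
  have det: "det (keep_cols n ?M B) \<noteq> 0" using B unfolding \<B>_def by blast
  obtain S' where S': "skew_symmetric_mat n S'"
    and P: "pivot n ?M B = S' + outer_self (mat_inv (keep_cols n ?M B) *\<^sub>v w)"
    using pivot_skew_plus_outer_self[OF S w det] by blast
  have w': "mat_inv (keep_cols n ?M B) *\<^sub>v w \<in> carrier_vec n"
    by (rule mult_mat_vec_carrier[OF mat_inv_carrier[OF keep_cols_carrier] w])
  have minor: "det (keep_cols n ?M (B \<triangle> X)) \<noteq> 0 \<longleftrightarrow> det (keep_cols n (pivot n ?M B) X) \<noteq> 0" for X
    using det_keep_cols_symdiff[OF det, of X] det by simp
  have Y: "?Y \<subseteq> {0..<n}" using B B' unfolding \<B>_def symdiff_def by blast
  have "B \<triangle> ?Y = B'" by (auto simp: symdiff_def)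
  then have "det (keep_cols n (pivot n ?M B) ?Y) \<noteq> 0" using minor[of ?Y] B' unfolding \<B>_def by simp
  then obtain y where y: "y \<in> ?Y" and "det (keep_cols n (pivot n ?M B) {x,y}) \<noteq> 0"
    and "det (keep_cols n (pivot n ?M B) (?Y \<triangle> {x,y})) \<noteq> 0"
    using exchange_skew_plus_outer_self[OF S' w' Y] x unfolding P by blast
  moreover have "B \<triangle> (?Y \<triangle> {x,y}) = B' \<triangle> {x,y}" by (auto simp: symdiff_def)
  moreover have "B \<triangle> {x,y} \<subseteq> {0..<n}" "B' \<triangle> {x,y} \<subseteq> {0..<n}"
    using B B' x y Y unfolding \<B>_def symdiff_def by blast+
  ultimately have "B \<triangle> {x,y} \<in> \<B>" "B' \<triangle> {x,y} \<in> \<B>"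
    unfolding \<B>_def using minor[of "{x,y}"] minor[of "?Y \<triangle> {x,y}"] by auto
  with y show ?thesis by blast
qed

lemma nonsingular_principal_submatrix_iff:
  fixes M :: "'a::field mat"
  assumes "M \<in> carrier_mat n n" "I \<subseteq> {0..<n}"
  shows "nonsingular (principal_submatrix M I) \<longleftrightarrow> det (keep_cols n M I) \<noteq> 0"
  unfolding nonsingular_def principal_submatrix_def det_keep_cols[OF assms] ..

theorem proposition2p28:
  fixes A :: "'a::field mat" and v :: "'a vec" and n :: nat
  assumes "skew_symmetric_mat n A"
    and "v \<in> carrier_vec n"
  shows "strong_delta_matroid {0..<n}
           {I. I \<subseteq> {0..<n} \<and> nonsingular (principal_submatrix (A + outer_self v) I)}"
proof -
  let ?M = "A + outer_self v"
  let ?\<B> = "{I. I \<subseteq> {0..<n} \<and> det (keep_cols n ?M I) \<noteq> 0}"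
  have "?M \<in> carrier_mat n n" using skew_symmetric_matD(1)[OF assms(1)] assms(2) by simp
  then have family: "{I. I \<subseteq> {0..<n} \<and> nonsingular (principal_submatrix ?M I)} = ?\<B>"
    using nonsingular_principal_submatrix_iff by blast
  have strong: "\<forall>B\<in>?\<B>. \<forall>B'\<in>?\<B>. \<forall>x\<in>B \<triangle> B'. \<exists>y\<in>B \<triangle> B'. B \<triangle> {x,y} \<in> ?\<B> \<and> B' \<triangle> {x,y} \<in> ?\<B>"
    by (intro ballI strong_exchange_skew_plus_outer_self[OF assms])
  show ?thesis
    unfolding family strong_delta_matroid_def delta_matroid_def
  proof (intro conjI)
    show "?\<B> \<noteq> {}" using keep_cols_empty[of n ?M] by auto
    show "\<forall>B\<in>?\<B>. \<forall>B'\<in>?\<B>. \<forall>x\<in>B \<triangle> B'. \<exists>y\<in>B \<triangle> B'. B \<triangle> {x,y} \<in> ?\<B>"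
      using strong by meson
  qed (use strong in auto)
qed

end
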